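(* Let $g = e^{2\lambda}(\hat v+\hat h)$ be a spacetime metric conformal to a 2+2 product, let $U$ be the canonical 2-form of its principal structure, and let $a\equiv -{*U}(\nabla\cdot *U)$, $b\equiv U(\nabla\cdot U)$. Then the metric is: of class $\binom{0}{0}$ iff $a=b=0$ iff $\lambda$ is constant ($d\lambda = 0$); of class $\binom{0}{1}$ iff $a=0$, $b\neq 0$ iff $d\lambda$ lies on the time-like principal plane ($d\lambda\neq 0$, $*U(d\lambda)=0$); of class $\binom{1}{0}$ iff $a\neq 0$, $b=0$ iff $d\lambda$ lies on the space-like principal plane ($d\lambda\neq0$, $U(d\lambda)=0$); of class $\binom{1}{1}$ iff $a\neq0$, $b\neq 0$ iff $d\lambda$ does not lie on a principal plane ($U(d\lambda)\neq 0$, $*U(d\lambda)\neq 0$).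
   Context: A spacetime is a 4-dimensional oriented Lorentzian manifold $(M,g)$ of signature $(-,+,+,+)$, Levi-Civita connection $\nabla$, volume element $\eta$; statements are local. $g$ is conformal to a 2+2 product: $g = e^{2\lambda}(\hat v+\hat h)$ where in suitable local coordinates $\hat v = \hat v_{ij}(x^1,x^2)dx^idx^j$ is a 2-dimensional Lorentzian metric and $\hat h = \hat h_{AB}(x^3,x^4)dx^Adx^B$ a 2-dimensional Riemannian metric. The principal structure is $(v,h)$ with $v = e^{2\lambda}\hat v$ (the $g$-orthogonal projector onto the time-like principal plane $V$) and $h = e^{2\lambda}\hat h = g-v$ (projector onto the space-like principal plane $H$); the canonical 2-form $U$ is the unit volume element of $V$, so $U^2 = v$, $\tr U^2=2$, and $-( *U)^2 = h$. Conventions: $(A\cdot B)^\alpha{}_\beta=A^\alpha{}_\mu B^\mu{}_\beta$, $A(x)^\alpha = A^\alpha{}_\beta x^\beta$, $( *U)_{\alpha\beta}=\frac12\eta_{\alpha\beta\mu\nu}U^{\mu\nu}$, $(\nabla\cdot A)_\beta = \nabla_\alpha A^\alpha{}_\beta$. Second fundamental form of $V$: $Q_v(x,y) = h(\nabla_{v(x)}v(y))$; its symmetric part $S_v(x,y)=\frac12(Q_v(x,y)+Q_v(y,x))$ has trace $\tr S_v = g^{\alpha\beta}S_v(e_\alpha,e_\beta)$ (a vector); $V$ is minimal iff $\tr S_v = 0$; analogously for $H$ with $Q_h(x,y)=v(\nabla_{h(x)}h(y))$. Classes: $\binom00$ both principal planes minimal; $\binom01$ time-like plane minimal and space-like not;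 $\binom10$ space-like plane minimal and time-like not; $\binom11$ neither minimal. *)

theory Defs
  imports "HOL-Analysis.Analysis"
begin

text \<open>Points of the coordinate domain are vectors
  p :: real^4 with coordinates p$1, p$2 (time-like block) and p$3, p$4 (space-like
  block). Indices range over the 4-element type 4; the numerals 1,2,3,4 denote the
  coordinate indices (4 = 0 in that type, which is harmless). A (1,1)-tensor field
  T is stored as T a b p = T^a_b(p); a covariant 2-tensor field F as F a b p = F_ab(p);
  a covector field w as w c p = w_c(p); a vector field as X :: real^4 => real^4.\<close>

type_synonym scal = "real^4 \<Rightarrow> real"
type_synonym vfield = "real^4 \<Rightarrow> real^4"
type_synonym covec = "4 \<Rightarrow> real^4 \<Rightarrow> real"
type_synonym tens2 = "4 \<Rightarrow> 4 \<Rightarrow> real^4 \<Rightarrow> real"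

definition pd :: "4 \<Rightarrow> scal \<Rightarrow> scal" where
  "pd i f x = deriv (\<lambda>t. f (x + t *\<^sub>R axis i 1)) 0"

fun iter_pd :: "4 list \<Rightarrow> scal \<Rightarrow> scal" where
  "iter_pd [] f = f"
| "iter_pd (i # is) f = pd i (iter_pd is f)"

definition smooth_on :: "(real^4) set \<Rightarrow> scal \<Rightarrow> bool" where
  "smooth_on S f \<longleftrightarrow> (\<forall>is x. x \<in> S \<longrightarrow> iter_pd is f differentiable (at x))"

definition gmat :: "tens2 \<Rightarrow> real^4 \<Rightarrow> real^4^4" where
  "gmat g p = (\<chi> i j. g i j p)"

definition ginv :: "tens2 \<Rightarrow> tens2" where
  "ginv g a b p = matrix_inv (gmat g p) $ a $ b"

definition christ :: "tens2 \<Rightarrow> 4 \<Rightarrow> 4 \<Rightarrow> 4 \<Rightarrow> scal" where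
  "christ g a b c p =
     (\<Sum>d\<in>UNIV. ginv g a d p * (pd b (g d c) p + pd c (g d b) p - pd d (g b c) p)) / 2"

definition cov :: "tens2 \<Rightarrow> vfield \<Rightarrow> vfield \<Rightarrow> vfield" where
  "cov g X Y p = (\<chi> a. (\<Sum>b\<in>UNIV. X p $ b * pd b (\<lambda>q. Y q $ a) p)
                     + (\<Sum>b\<in>UNIV. \<Sum>c\<in>UNIV. christ g a b c p * X p $ b * Y p $ c))"

definition raise1 :: "tens2 \<Rightarrow> tens2 \<Rightarrow> tens2" where
  "raise1 g F a b p = (\<Sum>c\<in>UNIV. ginv g a c p * F c b p)"

definition app :: "tens2 \<Rightarrow> vfield \<Rightarrow> vfield" where
  "app A X p = (\<chi> a. \<Sum>b\<in>UNIV. A a b p * X p $ b)"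

definition appc :: "tens2 \<Rightarrow> tens2 \<Rightarrow> covec \<Rightarrow> vfield" where
  "appc g A w p = (\<chi> a. \<Sum>b\<in>UNIV. \<Sum>c\<in>UNIV. A a b p * ginv g b c p * w c p)"

definition coordf :: "4 \<Rightarrow> vfield" where
  "coordf i p = axis i 1"

text \<open>Second fundamental form Q_P(x,y) = R(nabla_{P x} P y), where P is the projector onto
  the plane and R the projector onto its orthogonal complement; trace of its symmetric part.\<close>
definition Qform :: "tens2 \<Rightarrow> tens2 \<Rightarrow> tens2 \<Rightarrow> vfield \<Rightarrow> vfield \<Rightarrow> vfield" where
  "Qform g P R X Y = app R (cov g (app P X) (app P Y))"

definition Sform :: "tens2 \<Rightarrow> tens2 \<Rightarrow> tens2 \<Rightarrow> vfield \<Rightarrow> vfield \<Rightarrow> vfield" where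
  "Sform g P R X Y p = (1/2) *\<^sub>R (Qform g P R X Y p + Qform g P R Y X p)"

definition trS :: "tens2 \<Rightarrow> tens2 \<Rightarrow> tens2 \<Rightarrow> vfield" where
  "trS g P R p = (\<Sum>\<alpha>\<in>UNIV. \<Sum>\<beta>\<in>UNIV. ginv g \<alpha> \<beta> p *\<^sub>R Sform g P R (coordf \<alpha>) (coordf \<beta>) p)"

definition divT :: "tens2 \<Rightarrow> tens2 \<Rightarrow> covec" where
  "divT g A b p = (\<Sum>a\<in>UNIV. pd a (A a b) p)
      + (\<Sum>a\<in>UNIV. \<Sum>c\<in>UNIV. christ g a a c p * A c b p)
      - (\<Sum>a\<in>UNIV. \<Sum>c\<in>UNIV. christ g c a b p * A a c p)"

definition ipos :: "4 \<Rightarrow> int" where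
  "ipos a = (if a = 1 then 1 else if a = 2 then 2 else if a = 3 then 3 else 4)"

definition lcsym :: "4 \<Rightarrow> 4 \<Rightarrow> 4 \<Rightarrow> 4 \<Rightarrow> real" where
  "lcsym a b c d = of_int (sgn (ipos b - ipos a) * sgn (ipos c - ipos a) * sgn (ipos d - ipos a)
                         * sgn (ipos c - ipos b) * sgn (ipos d - ipos b) * sgn (ipos d - ipos c))"

definition vol :: "tens2 \<Rightarrow> 4 \<Rightarrow> 4 \<Rightarrow> 4 \<Rightarrow> 4 \<Rightarrow> scal" where
  "vol g a b c d p = sqrt \<bar>det (gmat g p)\<bar> * lcsym a b c d"

definition hodge :: "tens2 \<Rightarrow> tens2 \<Rightarrow> tens2" where
  "hodge g F a b p = (\<Sum>\<mu>\<in>UNIV. \<Sum>\<nu>\<in>UNIV. vol g a b \<mu> \<nu> p *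
        (\<Sum>\<alpha>\<in>UNIV. \<Sum>\<beta>\<in>UNIV. ginv g \<mu> \<alpha> p * ginv g \<nu> \<beta> p * F \<alpha> \<beta> p)) / 2"

definition tl :: "4 \<Rightarrow> bool" where "tl i \<longleftrightarrow> i = 1 \<or> i = 2"
definition sp :: "4 \<Rightarrow> bool" where "sp i \<longleftrightarrow> i = 3 \<or> i = 4"

text \<open>vh i j x1 x2 = hat v_ij(x1,x2) (i,j in {1,2}); hh A B x3 x4 = hat h_AB(x3,x4) (A,B in {3,4}).\<close>
definition ghat :: "(4 \<Rightarrow> 4 \<Rightarrow> real \<Rightarrow> real \<Rightarrow> real) \<Rightarrow> (4 \<Rightarrow> 4 \<Rightarrow> real \<Rightarrow> real \<Rightarrow> real) \<Rightarrow> tens2" where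
  "ghat vh hh i j p = (if tl i \<and> tl j then vh i j (p$1) (p$2)
                       else if sp i \<and> sp j then hh i j (p$3) (p$4) else 0)"

definition gconf :: "scal \<Rightarrow> (4 \<Rightarrow> 4 \<Rightarrow> real \<Rightarrow> real \<Rightarrow> real) \<Rightarrow> (4 \<Rightarrow> 4 \<Rightarrow> real \<Rightarrow> real \<Rightarrow> real) \<Rightarrow> tens2" where
  "gconf lam vh hh i j p = exp (2 * lam p) * ghat vh hh i j p"

definition vcov :: "scal \<Rightarrow> (4 \<Rightarrow> 4 \<Rightarrow> real \<Rightarrow> real \<Rightarrow> real) \<Rightarrow> tens2" where
  "vcov lam vh i j p = (if tl i \<and> tl j then exp (2 * lam p) * vh i j (p$1) (p$2) else 0)"

definition hcov :: "scal \<Rightarrow> (4 \<Rightarrow> 4 \<Rightarrow> real \<Rightarrow> real \<Rightarrow> real) \<Rightarrow> tens2" where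
  "hcov lam hh i j p = (if sp i \<and> sp j then exp (2 * lam p) * hh i j (p$3) (p$4) else 0)"

definition vproj where "vproj lam vh hh = raise1 (gconf lam vh hh) (vcov lam vh)"
definition hproj where "hproj lam vh hh = raise1 (gconf lam vh hh) (hcov lam hh)"

text \<open>Canonical 2-form U (covariant): unit volume element of V, U = sqrt|det v_ij| dx1 wedge dx2.\<close>
definition Ucov :: "scal \<Rightarrow> (4 \<Rightarrow> 4 \<Rightarrow> real \<Rightarrow> real \<Rightarrow> real) \<Rightarrow> tens2" where
  "Ucov lam vh a b p =
     (let s = sqrt \<bar>vcov lam vh 1 1 p * vcov lam vh 2 2 p - vcov lam vh 1 2 p * vcov lam vh 2 1 p\<bar>
      in if a = 1 \<and> b = 2 then s else if a = 2 \<and> b = 1 then - s else 0)"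

definition Umix where "Umix lam vh hh = raise1 (gconf lam vh hh) (Ucov lam vh)"
definition sUmix where
  "sUmix lam vh hh = raise1 (gconf lam vh hh) (hodge (gconf lam vh hh) (Ucov lam vh))"

definition afield :: "scal \<Rightarrow> (4 \<Rightarrow> 4 \<Rightarrow> real \<Rightarrow> real \<Rightarrow> real) \<Rightarrow> (4 \<Rightarrow> 4 \<Rightarrow> real \<Rightarrow> real \<Rightarrow> real) \<Rightarrow> vfield" where
  "afield lam vh hh p = - appc (gconf lam vh hh) (sUmix lam vh hh)
                          (divT (gconf lam vh hh) (sUmix lam vh hh)) p"

definition bfield :: "scal \<Rightarrow> (4 \<Rightarrow> 4 \<Rightarrow> real \<Rightarrow> real \<Rightarrow> real) \<Rightarrow> (4 \<Rightarrow> 4 \<Rightarrow> real \<Rightarrow> real \<Rightarrow> real) \<Rightarrow> vfield" where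
  "bfield lam vh hh p = appc (gconf lam vh hh) (Umix lam vh hh)
                          (divT (gconf lam vh hh) (Umix lam vh hh)) p"

definition dlam :: "scal \<Rightarrow> real^4 \<Rightarrow> real^4" where
  "dlam lam p = (\<chi> c. pd c lam p)"

definition U_dlam where
  "U_dlam lam vh hh p = appc (gconf lam vh hh) (Umix lam vh hh) (\<lambda>c. pd c lam) p"
definition sU_dlam where
  "sU_dlam lam vh hh p = appc (gconf lam vh hh) (sUmix lam vh hh) (\<lambda>c. pd c lam) p"

definition V_minimal where
  "V_minimal Om lam vh hh \<longleftrightarrow>
     (\<forall>p\<in>Om. trS (gconf lam vh hh) (vproj lam vh hh) (hproj lam vh hh) p = 0)"
definition H_minimal where
  "H_minimal Om lam vh hh \<longleftrightarrow>
     (\<forall>p\<in>Om. trS (gconf lam vh hh) (hproj lam vh hh) (vproj lam vh hh) p = 0)"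

definition class00 where "class00 Om lam vh hh \<longleftrightarrow> V_minimal Om lam vh hh \<and> H_minimal Om lam vh hh"
definition class01 where "class01 Om lam vh hh \<longleftrightarrow> V_minimal Om lam vh hh \<and> \<not> H_minimal Om lam vh hh"
definition class10 where "class10 Om lam vh hh \<longleftrightarrow> \<not> V_minimal Om lam vh hh \<and> H_minimal Om lam vh hh"
definition class11 where "class11 Om lam vh hh \<longleftrightarrow> \<not> V_minimal Om lam vh hh \<and> \<not> H_minimal Om lam vh hh"

end

theory Submission
  imports Defs
begin

text \<open>In coordinates adapted to the product the inverse metric is block diagonal, and the conformal
  factor enters the Christoffel symbols only through \<open>d\<lambda>\<close>. The mixed symbols
  \<open>\<Gamma>\<^sup>A\<^sub>i\<^sub>j = - ghat\<^sub>i\<^sub>j ghat\<^sup>A\<^sup>B \<partial>\<^sub>B\<lambda>\<close> give \<open>tr S\<^sub>v = -2 e\<^sup>-\<^sup>2\<^sup>\<lambda> ghat\<^sup>A\<^sup>B \<partial>\<^sub>B\<lambda>\<close>, so \<open>V\<close> is minimal exactly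
  where the space-like part of \<open>d\<lambda>\<close> vanishes, and symmetrically for \<open>H\<close> and the time-like part.
  As (1,1)-tensors, \<open>U\<close> and \<open>*U\<close> are the rotations by a right angle in the two planes and do not
  depend on \<open>\<lambda>\<close>. Since area forms of 2-metrics are parallel, only the conformal terms survive in the
  divergence, \<open>\<nabla>\<cdot>U = 2 d\<lambda>\<cdot>U\<close> and \<open>\<nabla>\<cdot>*U = 2 d\<lambda>\<cdot>*U\<close>. Hence \<open>b\<close> and \<open>U(d\<lambda>)\<close> vanish exactly
  where the time-like part of \<open>d\<lambda>\<close> does, \<open>a\<close> and \<open>*U(d\<lambda>)\<close> exactly where the space-like part does,
  and the four classes are the four combinations.\<close>

section \<open>Coordinate calculus\<close>

lemma has_real_derivative_pd:
  assumes "f differentiable (at x)"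
  shows "((\<lambda>t. f (x + t *\<^sub>R axis i 1)) has_real_derivative pd i f x) (at 0)"
proof -
  obtain f' where f': "(f has_derivative f') (at x)" using assms differentiable_def by blast
  have line: "((\<lambda>t::real. x + t *\<^sub>R axis i 1) has_derivative (\<lambda>t. t *\<^sub>R axis i (1::real))) (at 0)"
    by (auto intro!: derivative_eq_intros)
  have "((\<lambda>t. f (x + t *\<^sub>R axis i 1)) has_derivative (\<lambda>t. f' (t *\<^sub>R axis i 1))) (at 0)"
    using diff_chain_at[OF line] f' by (simp add: o_def)
  moreover have "(\<lambda>t. f' (t *\<^sub>R axis i 1)) = (*) (f' (axis i 1))"
    using linear_scale[OF has_derivative_linear[OF f']] by (auto simp: mult.commute)
  ultimately have d: "((\<lambda>t. f (x + t *\<^sub>R axis i 1)) has_real_derivative f' (axis i 1)) (at 0)"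
    by (simp add: has_field_derivative_def)
  then have "pd i f x = f' (axis i 1)" unfolding pd_def by (rule DERIV_imp_deriv)
  with d show ?thesis by simp
qed

lemma pd_eqI:
  assumes "((\<lambda>t. f (x + t *\<^sub>R axis i 1)) has_real_derivative D) (at 0)"
  shows "pd i f x = D"
  unfolding pd_def using assms by (rule DERIV_imp_deriv)

lemma pd_const_on_line:
  assumes "\<And>t. f (x + t *\<^sub>R axis i 1) = c"
  shows "pd i f x = 0"
  by (rule pd_eqI) (simp add: assms)

lemma pd_cong_open:
  assumes "open S" "x \<in> S" "\<And>y. y \<in> S \<Longrightarrow> f y = g y"
  shows "pd i f x = pd i g x"
proof -
  have "open ((\<lambda>t::real. x + t *\<^sub>R axis i 1) -` S)"
    by (rule open_vimage[OF assms(1)]) (auto intro!: continuous_intros)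
  moreover have "0 \<in> (\<lambda>t::real. x + t *\<^sub>R axis i 1) -` S" using assms(2) by simp
  ultimately have "\<forall>\<^sub>F t in nhds 0. x + t *\<^sub>R axis i 1 \<in> S"
    using eventually_nhds by blast
  then have "\<forall>\<^sub>F t in nhds 0. f (x + t *\<^sub>R axis i 1) = g (x + t *\<^sub>R axis i 1)"
    by eventually_elim (simp add: assms(3))
  then show ?thesis unfolding pd_def by (rule deriv_cong_ev) simp
qed

lemma num4_neq [simp]:
  "(1::4) \<noteq> 2" "(1::4) \<noteq> 3" "(1::4) \<noteq> 4" "(2::4) \<noteq> 1" "(2::4) \<noteq> 3" "(2::4) \<noteq> 4"
  "(3::4) \<noteq> 1" "(3::4) \<noteq> 2" "(3::4) \<noteq> 4" "(4::4) \<noteq> 1" "(4::4) \<noteq> 2" "(4::4) \<noteq> 3"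
  by simp_all

lemma tl_sp_simps [simp]: "tl 1" "tl 2" "\<not> tl 3" "\<not> tl 4" "sp 3" "sp 4" "\<not> sp 1" "\<not> sp 2"
  by (simp_all add: tl_def sp_def)

lemma sum_diag_indicator_left:
  "(\<Sum>b\<in>(UNIV::4 set). (if Q a \<and> a = b then 1 else 0) * F b) = (if Q a then F a else (0::real))"
  by (simp add: if_distrib[where f="\<lambda>x. x * _"] cong: if_cong)

lemma sum_diag_indicator_right:
  "(\<Sum>b\<in>(UNIV::4 set). f b * (if Q b \<and> b = \<alpha> then 1 else 0)) = (if Q \<alpha> then f \<alpha> else (0::real))"
proof -
  have "(\<Sum>b\<in>UNIV. f b * (if Q b \<and> b = \<alpha> then 1 else 0))
      = (\<Sum>b\<in>UNIV. if b = \<alpha> then (if Q \<alpha> then f \<alpha> else 0) else 0)"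
    by (rule sum.cong) auto
  then show ?thesis by simp
qed

lemma sum_diag_indicator_2:
  "(\<Sum>b\<in>(UNIV::4 set). \<Sum>c\<in>(UNIV::4 set).
      f b c * ((if Q b \<and> b = \<alpha> then 1 else 0) * (if R c \<and> c = \<beta> then 1 else 0)))
   = (if Q \<alpha> \<and> R \<beta> then f \<alpha> \<beta> else (0::real))"
proof -
  have "\<And>b. (\<Sum>c\<in>UNIV. f b c * ((if Q b \<and> b = \<alpha> then 1 else 0) * (if R c \<and> c = \<beta> then 1 else 0)))
      = (if R \<beta> then f b \<beta> * (if Q b \<and> b = \<alpha> then 1 else 0) else 0)"
    using sum_diag_indicator_right[of "\<lambda>c. f _ c * (if Q _ \<and> _ = \<alpha> then 1 else 0)" R \<beta>]
    by (simp add: mult.assoc mult.commute[of "if R _ \<and> _ = _ then _ else _"] mult.left_commute)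
  then show ?thesis by (cases "R \<beta>") (simp_all add: sum_diag_indicator_right)
qed

lemma sum_mult_axis: "(\<Sum>b\<in>UNIV. f b * (axis \<beta> (1::real) $ b)) = f \<beta>"
proof -
  have "(\<Sum>b\<in>UNIV. f b * (axis \<beta> (1::real) $ b)) = (\<Sum>b\<in>UNIV. if b = \<beta> then f \<beta> else 0)"
    by (rule sum.cong) (auto simp: axis_def)
  then show ?thesis by simp
qed

lemma det_4x4:
  "det (A::'a::comm_ring_1^4^4) =
    A$1$1 * A$2$2 * A$3$3 * A$4$4 - A$1$1 * A$2$2 * A$3$4 * A$4$3
  - A$1$1 * A$2$3 * A$3$2 * A$4$4 + A$1$1 * A$2$3 * A$3$4 * A$4$2
  + A$1$1 * A$2$4 * A$3$2 * A$4$3 - A$1$1 * A$2$4 * A$3$3 * A$4$2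
  - A$1$2 * A$2$1 * A$3$3 * A$4$4 + A$1$2 * A$2$1 * A$3$4 * A$4$3
  + A$1$2 * A$2$3 * A$3$1 * A$4$4 - A$1$2 * A$2$3 * A$3$4 * A$4$1
  - A$1$2 * A$2$4 * A$3$1 * A$4$3 + A$1$2 * A$2$4 * A$3$3 * A$4$1
  + A$1$3 * A$2$1 * A$3$2 * A$4$4 - A$1$3 * A$2$1 * A$3$4 * A$4$2
  - A$1$3 * A$2$2 * A$3$1 * A$4$4 + A$1$3 * A$2$2 * A$3$4 * A$4$1
  + A$1$3 * A$2$4 * A$3$1 * A$4$2 - A$1$3 * A$2$4 * A$3$2 * A$4$1
  - A$1$4 * A$2$1 * A$3$2 * A$4$3 + A$1$4 * A$2$1 * A$3$3 * A$4$2
  + A$1$4 * A$2$2 * A$3$1 * A$4$3 - A$1$4 * A$2$2 * A$3$3 * A$4$1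
  - A$1$4 * A$2$3 * A$3$1 * A$4$2 + A$1$4 * A$2$3 * A$3$2 * A$4$1"
proof -
  have f1: "finite {2::4, 3, 4}" "1 \<notin> {2::4, 3, 4}" by auto
  have f2: "finite {3::4, 4}" "2 \<notin> {3::4, 4}" by auto
  have f3: "finite {4::4}" "3 \<notin> {4::4}" by auto
  show ?thesis
    unfolding det_def UNIV_4
    unfolding sum_over_permutations_insert[OF f1] sum_over_permutations_insert[OF f2]
      sum_over_permutations_insert[OF f3] permutes_sing
    by (simp add: sign_swap_id permutation_swap_id permutation_compose sign_compose sign_id
        swap_id_eq algebra_simps)
qed

lemma lin_2x2_eq_0_iff:
  fixes a b c d x y :: real
  assumes "a * d - b * c \<noteq> 0"
  shows "(a * x + b * y = 0 \<and> c * x + d * y = 0) \<longleftrightarrow> (x = 0 \<and> y = 0)"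
proof
  assume eqs: "a * x + b * y = 0 \<and> c * x + d * y = 0"
  have "(a * d - b * c) * x = d * (a * x + b * y) - b * (c * x + d * y)"
    and "(a * d - b * c) * y = a * (c * x + d * y) - c * (a * x + b * y)"
    by (simp_all add: algebra_simps)
  then have "(a * d - b * c) * x = 0" "(a * d - b * c) * y = 0"
    using eqs by simp_all
  with assms show "x = 0 \<and> y = 0" by simp
qed simp

section \<open>The inverse metric and the Christoffel symbols\<close>

locale conformal_product =
  fixes A B :: "(real \<times> real) set"
    and lam :: "real^4 \<Rightarrow> real"
    and vh hh :: "4 \<Rightarrow> 4 \<Rightarrow> real \<Rightarrow> real \<Rightarrow> real"
    and Om :: "(real^4) set"
  assumes open_A: "open A" and open_B: "open B"
    and Om_def: "Om = {p. (p$1, p$2) \<in> A \<and> (p$3, p$4) \<in> B}"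
    and vh_lor: "\<And>x y. (x, y) \<in> A \<Longrightarrow>
           vh 1 2 x y = vh 2 1 x y \<and> vh 1 1 x y * vh 2 2 x y - (vh 1 2 x y)^2 < 0"
    and hh_riem: "\<And>x y. (x, y) \<in> B \<Longrightarrow>
           hh 3 4 x y = hh 4 3 x y \<and> hh 3 3 x y > 0 \<and> hh 3 3 x y * hh 4 4 x y - (hh 3 4 x y)^2 > 0"
    and smooth_ghat: "\<And>i j. smooth_on Om (ghat vh hh i j)"
    and smooth_lam: "smooth_on Om lam"
begin

abbreviation g where "g \<equiv> gconf lam vh hh"

lemma open_Om: "open Om"
proof -
  have "Om = (\<lambda>p. (p$1, p$2)) -` A \<inter> (\<lambda>p. (p$3, p$4)) -` B" by (auto simp: Om_def)
  moreover have "open ((\<lambda>p::real^4. (p$1, p$2)) -` A)"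
    by (rule open_vimage[OF open_A]) (auto intro!: continuous_intros)
  moreover have "open ((\<lambda>p::real^4. (p$3, p$4)) -` B)"
    by (rule open_vimage[OF open_B]) (auto intro!: continuous_intros)
  ultimately show ?thesis by auto
qed

definition "vhat i j p = vh i j (p$1) (p$2)"
definition "hhat i j p = hh i j (p$3) (p$4)"
definition "vdet p = vhat 1 1 p * vhat 2 2 p - vhat 1 2 p * vhat 1 2 p"
definition "hdet p = hhat 3 3 p * hhat 4 4 p - hhat 3 4 p * hhat 3 4 p"
definition "conf p = exp (2 * lam p)"
definition "dl d p = pd d lam p"
definition "dghat d i j p = pd d (ghat vh hh i j) p"

lemma vhat_sym: "p \<in> Om \<Longrightarrow> vhat 2 1 p = vhat 1 2 p"
  using vh_lor by (auto simp: Om_def vhat_def)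

lemma hhat_sym: "p \<in> Om \<Longrightarrow> hhat 4 3 p = hhat 3 4 p"
  using hh_riem by (auto simp: Om_def hhat_def)

lemma vdet_neg: assumes "p \<in> Om" shows "vdet p < 0"
proof -
  have "(p$1, p$2) \<in> A" using assms by (auto simp: Om_def)
  from vh_lor[OF this] show ?thesis unfolding vhat_def vdet_def power2_eq_square by linarith
qed

lemma hdet_pos: assumes "p \<in> Om" shows "hdet p > 0"
proof -
  have "(p$3, p$4) \<in> B" using assms by (auto simp: Om_def)
  from hh_riem[OF this] show ?thesis unfolding hhat_def hdet_def power2_eq_square by linarith
qed

lemma vdet_nonzero: "p \<in> Om \<Longrightarrow> vdet p \<noteq> 0"
  using vdet_neg[of p] by simp

lemma hdet_nonzero: "p \<in> Om \<Longrightarrow> hdet p \<noteq> 0"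
  using hdet_pos[of p] by simp

lemma conf_nonzero: "conf p \<noteq> 0"
  by (simp add: conf_def)

lemma ghat_coord: "p \<in> Om \<Longrightarrow>
  ghat vh hh 1 1 p = vhat 1 1 p \<and> ghat vh hh 1 2 p = vhat 1 2 p \<and>
  ghat vh hh 2 1 p = vhat 1 2 p \<and> ghat vh hh 2 2 p = vhat 2 2 p \<and>
  ghat vh hh 3 3 p = hhat 3 3 p \<and> ghat vh hh 3 4 p = hhat 3 4 p \<and>
  ghat vh hh 4 3 p = hhat 3 4 p \<and> ghat vh hh 4 4 p = hhat 4 4 p \<and>
  ghat vh hh 1 3 p = 0 \<and> ghat vh hh 1 4 p = 0 \<and> ghat vh hh 2 3 p = 0 \<and> ghat vh hh 2 4 p = 0 \<and>
  ghat vh hh 3 1 p = 0 \<and> ghat vh hh 4 1 p = 0 \<and> ghat vh hh 3 2 p = 0 \<and> ghat vh hh 4 2 p = 0"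
  using vhat_sym[of p] hhat_sym[of p] by (simp add: ghat_def vhat_def hhat_def)

text \<open>The inverse of \<open>ghat\<close>, blockwise by the 2x2 adjugate formula.\<close>

definition ghat_inv :: "4 \<Rightarrow> 4 \<Rightarrow> real^4 \<Rightarrow> real" where
  "ghat_inv i j p =
    (if i = 1 \<and> j = 1 then vhat 2 2 p / vdet p else if i = 1 \<and> j = 2 then - vhat 1 2 p / vdet p
     else if i = 2 \<and> j = 1 then - vhat 1 2 p / vdet p else if i = 2 \<and> j = 2 then vhat 1 1 p / vdet p
     else if i = 3 \<and> j = 3 then hhat 4 4 p / hdet p else if i = 3 \<and> j = 4 then - hhat 3 4 p / hdet p
     else if i = 4 \<and> j = 3 then - hhat 3 4 p / hdet p else if i = 4 \<and> j = 4 then hhat 3 3 p / hdet p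
     else 0)"

lemma ginv_gconf:
  assumes p: "p \<in> Om"
  shows "ginv g i j p = ghat_inv i j p / conf p"
proof -
  let ?M = "gmat g p"
  let ?N = "(\<chi> i j. ghat_inv i j p / conf p) :: real^4^4"
  note nz = vdet_nonzero[OF p] hdet_nonzero[OF p] conf_nonzero[of p]
  have M: "\<And>i j. ?M $ i $ j = conf p * ghat vh hh i j p"
    by (simp add: gmat_def gconf_def conf_def)
  have right: "?M ** ?N = mat 1" and left: "?N ** ?M = mat 1"
    unfolding vec_eq_iff matrix_matrix_mult_def
    by (simp_all add: M sum_4 mat_def forall_4 ghat_coord[OF p] ghat_inv_def nz field_simps)
      (simp_all add: vdet_def hdet_def algebra_simps)
  then have "?M ** matrix_inv ?M = mat 1 \<and> matrix_inv ?M ** ?M = mat 1"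
    unfolding matrix_inv_def by (rule someI[of "\<lambda>X. ?M ** X = mat 1 \<and> X ** ?M = mat 1", OF conjI])
  then have "matrix_inv ?M = matrix_inv ?M ** (?M ** ?N)"
    using right by simp
  also have "\<dots> = ?N"
    using \<open>?M ** matrix_inv ?M = mat 1 \<and> matrix_inv ?M ** ?M = mat 1\<close>
    by (simp add: matrix_mul_assoc)
  finally show ?thesis unfolding ginv_def by simp
qed

lemma ghat_inv_offblock: "\<not> (tl i \<and> tl j) \<Longrightarrow> \<not> (sp i \<and> sp j) \<Longrightarrow> ghat_inv i j p = 0"
  using exhaust_4[of i] exhaust_4[of j] by (elim disjE) (simp_all add: ghat_inv_def)

lemma ghat_inv_sym: "ghat_inv 2 1 p = ghat_inv 1 2 p" "ghat_inv 4 3 p = ghat_inv 3 4 p"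
  by (simp_all add: ghat_inv_def)

lemma ghat_inv_vhat_trace: assumes p: "p \<in> Om"
  shows "ghat_inv 1 1 p * vhat 1 1 p + 2 * ghat_inv 1 2 p * vhat 1 2 p + ghat_inv 2 2 p * vhat 2 2 p = 2"
  using vdet_nonzero[OF p] by (simp add: ghat_inv_def field_simps) (simp add: vdet_def algebra_simps)

lemma ghat_inv_hhat_trace: assumes p: "p \<in> Om"
  shows "ghat_inv 3 3 p * hhat 3 3 p + 2 * ghat_inv 3 4 p * hhat 3 4 p + ghat_inv 4 4 p * hhat 4 4 p = 2"
  using hdet_nonzero[OF p] by (simp add: ghat_inv_def field_simps) (simp add: hdet_def algebra_simps)

lemma ghat_inv_vdet: assumes p: "p \<in> Om"
  shows "ghat_inv 1 1 p * ghat_inv 2 2 p - ghat_inv 1 2 p * ghat_inv 1 2 p = 1 / vdet p"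
  using vdet_nonzero[OF p] by (simp add: ghat_inv_def field_simps) (simp add: vdet_def algebra_simps)

lemma ghat_inv_hdet: assumes p: "p \<in> Om"
  shows "ghat_inv 3 3 p * ghat_inv 4 4 p - ghat_inv 3 4 p * ghat_inv 3 4 p = 1 / hdet p"
  using hdet_nonzero[OF p] by (simp add: ghat_inv_def field_simps) (simp add: hdet_def algebra_simps)

lemma ghat_inv_vhat: assumes p: "p \<in> Om" and "tl a" "tl c"
  shows "ghat_inv a 1 p * ghat vh hh 1 c p + ghat_inv a 2 p * ghat vh hh 2 c p = (if a = c then 1 else 0)"
proof -
  have "a = 1 \<or> a = 2" "c = 1 \<or> c = 2" using assms by (auto simp: tl_def)
  then show ?thesis using vdet_nonzero[OF p]
    by (elim disjE) ((simp add: ghat_inv_def ghat_coord[OF p] field_simps), (simp add: vdet_def algebra_simps)?)+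
qed

lemma ghat_inv_hhat: assumes p: "p \<in> Om" and "sp a" "sp c"
  shows "ghat_inv a 3 p * ghat vh hh 3 c p + ghat_inv a 4 p * ghat vh hh 4 c p = (if a = c then 1 else 0)"
proof -
  have "a = 3 \<or> a = 4" "c = 3 \<or> c = 4" using assms by (auto simp: sp_def)
  then show ?thesis using hdet_nonzero[OF p]
    by (elim disjE) ((simp add: ghat_inv_def ghat_coord[OF p] field_simps), (simp add: hdet_def algebra_simps)?)+
qed

lemma differentiable_lam: "p \<in> Om \<Longrightarrow> lam differentiable (at p)"
  using smooth_lam unfolding smooth_on_def by (metis iter_pd.simps(1))

lemma differentiable_ghat: "p \<in> Om \<Longrightarrow> ghat vh hh i j differentiable (at p)"
  using smooth_ghat unfolding smooth_on_def by (metis iter_pd.simps(1))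

lemma pd_gconf: assumes p: "p \<in> Om"
  shows "pd d (g i j) p = conf p * (2 * dl d p * ghat vh hh i j p + dghat d i j p)"
proof -
  have "((\<lambda>t. exp (2 * lam (p + t *\<^sub>R axis d 1)) * ghat vh hh i j (p + t *\<^sub>R axis d 1))
      has_real_derivative
      exp (2 * lam (p + 0 *\<^sub>R axis d 1)) * (2 * dl d p) * ghat vh hh i j (p + 0 *\<^sub>R axis d 1) +
      exp (2 * lam (p + 0 *\<^sub>R axis d 1)) * dghat d i j p) (at 0)"
    by (rule derivative_eq_intros refl
        has_real_derivative_pd[OF differentiable_lam[OF p], folded dl_def]
        has_real_derivative_pd[OF differentiable_ghat[OF p], folded dghat_def] | simp)+
  then show ?thesis
    unfolding gconf_def conf_def by (intro pd_eqI) (simp add: algebra_simps)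
qed

lemma dghat_offblock: "\<not> (tl i \<and> tl j) \<Longrightarrow> \<not> (sp i \<and> sp j) \<Longrightarrow> dghat d i j p = 0"
  unfolding dghat_def by (rule pd_const_on_line[where c=0]) (auto simp: ghat_def)

lemma dghat_vhat_along_sp: "sp d \<Longrightarrow> tl i \<Longrightarrow> tl j \<Longrightarrow> dghat d i j p = 0"
  unfolding dghat_def
  by (auto intro!: pd_const_on_line[where c="vh i j (p$1) (p$2)"] simp: ghat_def axis_def sp_def tl_def)

lemma dghat_hhat_along_tl: "tl d \<Longrightarrow> sp i \<Longrightarrow> sp j \<Longrightarrow> dghat d i j p = 0"
  unfolding dghat_def
  by (auto intro!: pd_const_on_line[where c="hh i j (p$3) (p$4)"] simp: ghat_def axis_def sp_def tl_def)

lemma dghat_sym: "p \<in> Om \<Longrightarrow> dghat d 2 1 p = dghat d 1 2 p" "p \<in> Om \<Longrightarrow> dghat d 4 3 p = dghat d 3 4 p"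
  unfolding dghat_def
  by (rule pd_cong_open[OF open_Om], assumption, use vhat_sym hhat_sym in \<open>auto simp: ghat_def vhat_def hhat_def\<close>)+

text \<open>The conformal factor cancels between \<open>ginv\<close> and \<open>\<partial>g\<close>; only \<open>d\<lambda>\<close> survives of it.\<close>

lemma christ_gconf: assumes p: "p \<in> Om"
  shows "christ g a b c p = (\<Sum>d\<in>UNIV. ghat_inv a d p *
     (2 * dl b p * ghat vh hh d c p + dghat b d c p + 2 * dl c p * ghat vh hh d b p + dghat c d b p
      - 2 * dl d p * ghat vh hh b c p - dghat d b c p)) / 2"
  unfolding christ_def ginv_gconf[OF p] pd_gconf[OF p]
  by (intro arg_cong[where f="\<lambda>x. x / 2"] sum.cong refl) (simp add: conf_nonzero field_simps)

lemma christ_stt: assumes p: "p \<in> Om" and "sp a" "tl b" "tl c"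
  shows "christ g a b c p = - ghat vh hh b c p * (ghat_inv a 3 p * dl 3 p + ghat_inv a 4 p * dl 4 p)"
proof -
  have "a = 3 \<or> a = 4" "b = 1 \<or> b = 2" "c = 1 \<or> c = 2"
    using assms by (auto simp: sp_def tl_def)
  then show ?thesis unfolding christ_gconf[OF p] sum_4
    by (elim disjE)
      (simp_all add: ghat_inv_offblock ghat_coord[OF p] dghat_offblock dghat_vhat_along_sp field_simps)
qed

lemma christ_tss: assumes p: "p \<in> Om" and "tl a" "sp b" "sp c"
  shows "christ g a b c p = - ghat vh hh b c p * (ghat_inv a 1 p * dl 1 p + ghat_inv a 2 p * dl 2 p)"
proof -
  have "a = 1 \<or> a = 2" "b = 3 \<or> b = 4" "c = 3 \<or> c = 4"
    using assms by (auto simp: sp_def tl_def)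
  then show ?thesis unfolding christ_gconf[OF p] sum_4
    by (elim disjE)
      (simp_all add: ghat_inv_offblock ghat_coord[OF p] dghat_offblock dghat_hhat_along_tl field_simps)
qed

section \<open>Minimality of the principal planes\<close>

lemma vproj_coord: assumes q: "q \<in> Om"
  shows "vproj lam vh hh a b q = (if tl a \<and> a = b then 1 else 0)"
  unfolding vproj_def raise1_def ginv_gconf[OF q] vcov_def sum_4
  using exhaust_4[of a] exhaust_4[of b] conf_nonzero[of q] vdet_nonzero[OF q]
  by (elim disjE)
    (simp_all add: ghat_inv_def vhat_def[symmetric] conf_def[symmetric] vhat_sym[OF q] field_simps,
     simp_all add: vdet_def conf_def algebra_simps)

lemma hproj_coord: assumes q: "q \<in> Om"
  shows "hproj lam vh hh a b q = (if sp a \<and> a = b then 1 else 0)"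
  unfolding hproj_def raise1_def ginv_gconf[OF q] hcov_def sum_4
  using exhaust_4[of a] exhaust_4[of b] conf_nonzero[of q] hdet_nonzero[OF q]
  by (elim disjE)
    (simp_all add: ghat_inv_def hhat_def[symmetric] conf_def[symmetric] hhat_sym[OF q] field_simps,
     simp_all add: hdet_def conf_def algebra_simps)

lemma Qform_coord:
  assumes p: "p \<in> Om"
    and P: "\<And>q a b. q \<in> Om \<Longrightarrow> P a b q = (if T a \<and> a = b then 1 else 0)"
    and R: "\<And>q a b. q \<in> Om \<Longrightarrow> R a b q = (if S a \<and> a = b then 1 else 0)"
  shows "Qform g P R (coordf \<alpha>) (coordf \<beta>) p $ a =
     (if S a \<and> T \<alpha> \<and> T \<beta> then christ g a \<alpha> \<beta> p else 0)"
proof -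
  have app_coordf: "\<And>q c \<gamma>. app P (coordf \<gamma>) q $ c = P c \<gamma> q"
    by (simp add: app_def coordf_def sum_mult_axis)
  have pd_P: "pd b (P c \<beta>) p = 0" for b c
  proof -
    have "pd b (P c \<beta>) p = pd b (\<lambda>q. (if T c \<and> c = \<beta> then 1 else 0)) p"
      by (rule pd_cong_open[OF open_Om p]) (simp add: P)
    also have "\<dots> = 0" by (rule pd_const_on_line) simp
    finally show ?thesis .
  qed
  have "cov g (app P (coordf \<alpha>)) (app P (coordf \<beta>)) p $ c
      = (if T \<alpha> \<and> T \<beta> then christ g c \<alpha> \<beta> p else 0)" for c
    by (simp add: cov_def pd_P app_coordf P[OF p] sum_diag_indicator_2 mult.assoc)
  then show ?thesis
    unfolding Qform_def app_def vec_lambda_beta R[OF p] sum_diag_indicator_left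
    by (simp add: app_def[symmetric])
qed

lemma trS_V: assumes p: "p \<in> Om"
  shows "trS g (vproj lam vh hh) (hproj lam vh hh) p $ a =
     (if sp a then -(2 / conf p) * (ghat_inv a 3 p * dl 3 p + ghat_inv a 4 p * dl 4 p) else 0)"
proof -
  have Q: "Qform g (vproj lam vh hh) (hproj lam vh hh) (coordf \<alpha>) (coordf \<beta>) p $ a =
     (if sp a \<and> tl \<alpha> \<and> tl \<beta> then christ g a \<alpha> \<beta> p else 0)" for \<alpha> \<beta> a
    by (rule Qform_coord[OF p]) (simp_all add: vproj_coord hproj_coord)
  show ?thesis
  proof (cases "sp a")
    case True
    define X where "X = ghat_inv a 3 p * dl 3 p + ghat_inv a 4 p * dl 4 p"
    have "trS g (vproj lam vh hh) (hproj lam vh hh) p $ a = - (X / conf p) *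
        (ghat_inv 1 1 p * vhat 1 1 p + 2 * ghat_inv 1 2 p * vhat 1 2 p + ghat_inv 2 2 p * vhat 2 2 p)"
      unfolding trS_def sum_component vector_scaleR_component Sform_def vector_add_component Q
        ginv_gconf[OF p] sum_4
      using True conf_nonzero[of p]
      by (simp add: christ_stt[OF p] ghat_coord[OF p] ghat_inv_sym field_simps)
        (simp add: X_def algebra_simps)
    then show ?thesis using True ghat_inv_vhat_trace[OF p] by (simp add: X_def)
  next
    case False
    then show ?thesis
      unfolding trS_def sum_component vector_scaleR_component Sform_def vector_add_component Q by simp
  qed
qed

lemma trS_H: assumes p: "p \<in> Om"
  shows "trS g (hproj lam vh hh) (vproj lam vh hh) p $ a =
     (if tl a then -(2 / conf p) * (ghat_inv a 1 p * dl 1 p + ghat_inv a 2 p * dl 2 p) else 0)"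
proof -
  have Q: "Qform g (hproj lam vh hh) (vproj lam vh hh) (coordf \<alpha>) (coordf \<beta>) p $ a =
     (if tl a \<and> sp \<alpha> \<and> sp \<beta> then christ g a \<alpha> \<beta> p else 0)" for \<alpha> \<beta> a
    by (rule Qform_coord[OF p]) (simp_all add: vproj_coord hproj_coord)
  show ?thesis
  proof (cases "tl a")
    case True
    define X where "X = ghat_inv a 1 p * dl 1 p + ghat_inv a 2 p * dl 2 p"
    have "trS g (hproj lam vh hh) (vproj lam vh hh) p $ a = - (X / conf p) *
        (ghat_inv 3 3 p * hhat 3 3 p + 2 * ghat_inv 3 4 p * hhat 3 4 p + ghat_inv 4 4 p * hhat 4 4 p)"
      unfolding trS_def sum_component vector_scaleR_component Sform_def vector_add_component Q
        ginv_gconf[OF p] sum_4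
      using True conf_nonzero[of p]
      by (simp add: christ_tss[OF p] ghat_coord[OF p] ghat_inv_sym field_simps)
        (simp add: X_def algebra_simps)
    then show ?thesis using True ghat_inv_hhat_trace[OF p] by (simp add: X_def)
  next
    case False
    then show ?thesis
      unfolding trS_def sum_component vector_scaleR_component Sform_def vector_add_component Q by simp
  qed
qed

lemma trS_V_eq_0_iff: assumes p: "p \<in> Om"
  shows "trS g (vproj lam vh hh) (hproj lam vh hh) p = 0 \<longleftrightarrow> dl 3 p = 0 \<and> dl 4 p = 0"
proof -
  have "trS g (vproj lam vh hh) (hproj lam vh hh) p = 0 \<longleftrightarrow>
      (ghat_inv 3 3 p * dl 3 p + ghat_inv 3 4 p * dl 4 p = 0 \<and>
       ghat_inv 3 4 p * dl 3 p + ghat_inv 4 4 p * dl 4 p = 0)"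
    using conf_nonzero[of p] by (simp add: vec_eq_iff forall_4 trS_V[OF p] ghat_inv_sym) auto
  also have "\<dots> \<longleftrightarrow> dl 3 p = 0 \<and> dl 4 p = 0"
    by (rule lin_2x2_eq_0_iff) (simp add: ghat_inv_hdet[OF p] hdet_nonzero[OF p])
  finally show ?thesis .
qed

lemma trS_H_eq_0_iff: assumes p: "p \<in> Om"
  shows "trS g (hproj lam vh hh) (vproj lam vh hh) p = 0 \<longleftrightarrow> dl 1 p = 0 \<and> dl 2 p = 0"
proof -
  have "trS g (hproj lam vh hh) (vproj lam vh hh) p = 0 \<longleftrightarrow>
      (ghat_inv 1 1 p * dl 1 p + ghat_inv 1 2 p * dl 2 p = 0 \<and>
       ghat_inv 1 2 p * dl 1 p + ghat_inv 2 2 p * dl 2 p = 0)"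
    using conf_nonzero[of p] by (simp add: vec_eq_iff forall_4 trS_H[OF p] ghat_inv_sym) auto
  also have "\<dots> \<longleftrightarrow> dl 1 p = 0 \<and> dl 2 p = 0"
    by (rule lin_2x2_eq_0_iff) (simp add: ghat_inv_vdet[OF p] vdet_nonzero[OF p])
  finally show ?thesis .
qed

lemma V_minimal_iff: "V_minimal Om lam vh hh \<longleftrightarrow> (\<forall>p\<in>Om. dl 3 p = 0 \<and> dl 4 p = 0)"
  unfolding V_minimal_def using trS_V_eq_0_iff by auto

lemma H_minimal_iff: "H_minimal Om lam vh hh \<longleftrightarrow> (\<forall>p\<in>Om. dl 1 p = 0 \<and> dl 2 p = 0)"
  unfolding H_minimal_def using trS_H_eq_0_iff by auto


section \<open>The canonical 2-form and the field \<open>b\<close>\<close>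

definition "vvol q = sqrt (- vdet q)"

text \<open>\<open>U\<^sup>a\<^sub>b = Unum a b / vvol\<close>: as a (1,1)-tensor \<open>U\<close> does not see the conformal factor.\<close>

definition Unum :: "4 \<Rightarrow> 4 \<Rightarrow> real^4 \<Rightarrow> real" where
  "Unum a b q = (if a = 1 \<and> b = 1 then - vhat 1 2 q else if a = 1 \<and> b = 2 then - vhat 2 2 q
     else if a = 2 \<and> b = 1 then vhat 1 1 q else if a = 2 \<and> b = 2 then vhat 1 2 q else 0)"

definition dUnum :: "4 \<Rightarrow> 4 \<Rightarrow> 4 \<Rightarrow> real^4 \<Rightarrow> real" where
  "dUnum d a b p = (if a = 1 \<and> b = 1 then - dghat d 1 2 p else if a = 1 \<and> b = 2 then - dghat d 2 2 p
     else if a = 2 \<and> b = 1 then dghat d 1 1 p else if a = 2 \<and> b = 2 then dghat d 1 2 p else 0)"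

definition "dvdet d p = dghat d 1 1 p * vhat 2 2 p + vhat 1 1 p * dghat d 2 2 p - 2 * vhat 1 2 p * dghat d 1 2 p"

lemma vvol_nonzero: "q \<in> Om \<Longrightarrow> vvol q \<noteq> 0"
  using vdet_neg[of q] by (simp add: vvol_def)

lemma vdet_eq_vvol: "q \<in> Om \<Longrightarrow> vdet q = - (vvol q * vvol q)"
  using vdet_neg[of q] by (simp add: vvol_def)

lemma Ucov_norm: assumes q: "q \<in> Om"
  shows "sqrt \<bar>vcov lam vh 1 1 q * vcov lam vh 2 2 q - vcov lam vh 1 2 q * vcov lam vh 2 1 q\<bar>
    = conf q * vvol q"
proof -
  have "vcov lam vh 1 1 q * vcov lam vh 2 2 q - vcov lam vh 1 2 q * vcov lam vh 2 1 q
      = (conf q)^2 * vdet q"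
    by (simp add: vcov_def conf_def vhat_def[symmetric] vhat_sym[OF q] vdet_def power2_eq_square
        algebra_simps)
  also have "\<bar>\<dots>\<bar> = (conf q)^2 * (- vdet q)"
    using vdet_neg[OF q] by (simp add: abs_mult)
  finally have "sqrt \<bar>vcov lam vh 1 1 q * vcov lam vh 2 2 q - vcov lam vh 1 2 q * vcov lam vh 2 1 q\<bar>
      = sqrt ((conf q)^2) * sqrt (- vdet q)"
    by (simp only: real_sqrt_mult)
  then show ?thesis by (simp add: vvol_def conf_def)
qed

lemma Umix_coord: assumes q: "q \<in> Om"
  shows "Umix lam vh hh a b q = Unum a b q / vvol q"
  unfolding Umix_def raise1_def ginv_gconf[OF q] Ucov_def Let_def Ucov_norm[OF q] sum_4
  using exhaust_4[of a] exhaust_4[of b] vvol_nonzero[OF q] conf_nonzero[of q]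
  by (elim disjE) (simp_all add: ghat_inv_def Unum_def vdet_eq_vvol[OF q] field_simps)

lemma has_real_derivative_vhat: assumes p: "p \<in> Om" and "tl i" "tl j"
  shows "((\<lambda>t. vhat i j (p + t *\<^sub>R axis d 1)) has_real_derivative dghat d i j p) (at 0)"
proof -
  have "(\<lambda>q. vhat i j q) = ghat vh hh i j" using assms by (auto simp: vhat_def ghat_def)
  then show ?thesis
    using has_real_derivative_pd[OF differentiable_ghat[OF p], of i j d] by (simp add: dghat_def)
qed

lemma pd_Umix: assumes p: "p \<in> Om"
  shows "pd d (Umix lam vh hh a b) p = (dUnum d a b p - Unum a b p * dvdet d p / (2 * vdet p)) / vvol p"
proof -
  note V = has_real_derivative_vhat[OF p tl_sp_simps(1) tl_sp_simps(1), of d]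
    has_real_derivative_vhat[OF p tl_sp_simps(1) tl_sp_simps(2), of d]
    has_real_derivative_vhat[OF p tl_sp_simps(2) tl_sp_simps(2), of d]
  have N: "((\<lambda>t. Unum a b (p + t *\<^sub>R axis d 1)) has_real_derivative dUnum d a b p) (at 0)"
    using exhaust_4[of a] exhaust_4[of b]
    by (elim disjE) (simp_all add: Unum_def dUnum_def V DERIV_minus)
  have D: "((\<lambda>t. vdet (p + t *\<^sub>R axis d 1)) has_real_derivative dvdet d p) (at 0)"
    unfolding vdet_def
    by (rule DERIV_cong[OF DERIV_diff[OF DERIV_mult[OF V(1) V(3)] DERIV_mult[OF V(2) V(2)]]])
      (simp add: dvdet_def algebra_simps)
  have "0 < - vdet (p + 0 *\<^sub>R axis d 1)" using vdet_neg[OF p] by simp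
  from DERIV_chain2[OF DERIV_real_sqrt[OF this] DERIV_minus[OF D]]
  have S: "((\<lambda>t. vvol (p + t *\<^sub>R axis d 1)) has_real_derivative - dvdet d p / (2 * vvol p)) (at 0)"
    by (simp add: o_def vvol_def field_simps)
  have "pd d (Umix lam vh hh a b) p = pd d (\<lambda>q. Unum a b q / vvol q) p"
    by (rule pd_cong_open[OF open_Om p]) (simp add: Umix_coord)
  also have "\<dots> = (dUnum d a b p * vvol p - Unum a b p * (- dvdet d p / (2 * vvol p))) / (vvol p * vvol p)"
    by (rule pd_eqI) (use DERIV_divide[OF N S] vvol_nonzero[OF p] in simp)
  also have "\<dots> = (dUnum d a b p - Unum a b p * dvdet d p / (2 * vdet p)) / vvol p"
    using vvol_nonzero[OF p] by (simp add: vdet_eq_vvol[OF p] field_simps)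
  finally show ?thesis .
qed

definition "christ_vhat a b c p = (ghat_inv a 1 p * (dghat b 1 c p + dghat c 1 b p - dghat 1 b c p)
    + ghat_inv a 2 p * (dghat b 2 c p + dghat c 2 b p - dghat 2 b c p)) / 2"

lemma christ_ttt: assumes p: "p \<in> Om" and "tl a" "tl b" "tl c"
  shows "christ g a b c p = christ_vhat a b c p + (if a = c then dl b p else 0)
     + (if a = b then dl c p else 0) - ghat vh hh b c p * (ghat_inv a 1 p * dl 1 p + ghat_inv a 2 p * dl 2 p)"
proof -
  have "ghat_inv a 3 p = 0" "ghat_inv a 4 p = 0" using assms(2) by (auto simp: ghat_inv_def tl_def)
  then have "christ g a b c p = christ_vhat a b c p
     + dl b p * (ghat_inv a 1 p * ghat vh hh 1 c p + ghat_inv a 2 p * ghat vh hh 2 c p)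
     + dl c p * (ghat_inv a 1 p * ghat vh hh 1 b p + ghat_inv a 2 p * ghat vh hh 2 b p)
     - ghat vh hh b c p * (ghat_inv a 1 p * dl 1 p + ghat_inv a 2 p * dl 2 p)"
    unfolding christ_gconf[OF p] sum_4 christ_vhat_def by (simp add: field_simps)
  then show ?thesis using assms by (simp add: ghat_inv_vhat[OF p])
qed

lemma christ_sst_trace: assumes p: "p \<in> Om" and e: "tl e"
  shows "christ g 3 3 e p + christ g 4 4 e p = 2 * dl e p"
proof -
  have "christ g a a e p = dl e p * (ghat_inv a 3 p * ghat vh hh 3 a p + ghat_inv a 4 p * ghat vh hh 4 a p)"
    if "sp a" for a
  proof -
    have "a = 3 \<or> a = 4" "e = 1 \<or> e = 2" using that e by (auto simp: tl_def sp_def)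
    then show ?thesis unfolding christ_gconf[OF p] sum_4
      by (elim disjE)
        (simp_all add: ghat_inv_offblock ghat_coord[OF p] dghat_offblock dghat_hhat_along_tl field_simps)
  qed
  then have "christ g 3 3 e p + christ g 4 4 e p
     = dl e p * (ghat_inv 3 3 p * hhat 3 3 p + 2 * ghat_inv 3 4 p * hhat 3 4 p + ghat_inv 4 4 p * hhat 4 4 p)"
    by (simp add: ghat_coord[OF p] ghat_inv_sym algebra_simps)
  then show ?thesis using ghat_inv_hhat_trace[OF p] by simp
qed

lemma divT_Umix_expand: assumes p: "p \<in> Om" and c: "tl c"
  shows "divT g (Umix lam vh hh) c p =
   ((dUnum 1 1 c p - Unum 1 c p * dvdet 1 p / (2 * vdet p))
    + (dUnum 2 2 c p - Unum 2 c p * dvdet 2 p / (2 * vdet p))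
    + (christ g 1 1 1 p + christ g 2 2 1 p + (christ g 3 3 1 p + christ g 4 4 1 p)) * Unum 1 c p
    + (christ g 1 1 2 p + christ g 2 2 2 p + (christ g 3 3 2 p + christ g 4 4 2 p)) * Unum 2 c p
    - (christ g 1 1 c p * Unum 1 1 p + christ g 2 1 c p * Unum 1 2 p
       + christ g 1 2 c p * Unum 2 1 p + christ g 2 2 c p * Unum 2 2 p)) / vvol p"
proof -
  have "c = 1 \<or> c = 2" using c by (auto simp: tl_def)
  then show ?thesis
    unfolding divT_def pd_Umix[OF p] Umix_coord[OF p] sum_4
    using vvol_nonzero[OF p] by (elim disjE) (simp_all add: Unum_def dUnum_def field_simps)
qed

text \<open>The area form of \<open>vhat\<close> is parallel for \<open>vhat\<close>, so all derivatives of \<open>vhat\<close> cancel and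
  only the terms coming from the conformal factor survive.\<close>

lemma divT_Umix: assumes p: "p \<in> Om" and c: "tl c"
  shows "divT g (Umix lam vh hh) c p = 2 * (dl 1 p * Unum 1 c p + dl 2 p * Unum 2 c p) / vvol p"
proof -
  have "c = 1 \<or> c = 2" using c by (auto simp: tl_def)
  then have num: "(dUnum 1 1 c p - Unum 1 c p * dvdet 1 p / (2 * vdet p))
      + (dUnum 2 2 c p - Unum 2 c p * dvdet 2 p / (2 * vdet p))
      + (christ g 1 1 1 p + christ g 2 2 1 p + 2 * dl 1 p) * Unum 1 c p
      + (christ g 1 1 2 p + christ g 2 2 2 p + 2 * dl 2 p) * Unum 2 c p
      - (christ g 1 1 c p * Unum 1 1 p + christ g 2 1 c p * Unum 1 2 p
         + christ g 1 2 c p * Unum 2 1 p + christ g 2 2 c p * Unum 2 2 p)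
    = 2 * (dl 1 p * Unum 1 c p + dl 2 p * Unum 2 c p)"
    using vdet_nonzero[OF p]
    by (elim disjE)
      (simp_all add: christ_ttt[OF p] christ_vhat_def ghat_inv_def ghat_coord[OF p] Unum_def
         dUnum_def dvdet_def dghat_sym[OF p],
       simp_all add: field_simps, simp_all add: vdet_def algebra_simps)
  show ?thesis
    unfolding divT_Umix_expand[OF p c] christ_sst_trace[OF p tl_sp_simps(1)]
      christ_sst_trace[OF p tl_sp_simps(2)] num ..
qed

lemma appc_Umix: assumes p: "p \<in> Om"
  shows "appc g (Umix lam vh hh) w p $ a =
    (if a = 1 then - w 2 p / (conf p * vvol p) else if a = 2 then w 1 p / (conf p * vvol p) else 0)"
  unfolding appc_def vec_lambda_beta Umix_coord[OF p] ginv_gconf[OF p] sum_4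
  using exhaust_4[of a] vvol_nonzero[OF p] conf_nonzero[of p] vdet_nonzero[OF p]
  by (elim disjE) (simp_all add: Unum_def ghat_inv_def field_simps, simp_all add: vdet_def algebra_simps)

lemma bfield_eq_0_iff: assumes p: "p \<in> Om"
  shows "bfield lam vh hh p = 0 \<longleftrightarrow> dl 1 p = 0 \<and> dl 2 p = 0"
proof -
  have "bfield lam vh hh p = 0 \<longleftrightarrow>
      ((- vhat 1 2 p) * dl 1 p + vhat 1 1 p * dl 2 p = 0 \<and> (- vhat 2 2 p) * dl 1 p + vhat 1 2 p * dl 2 p = 0)"
    using vvol_nonzero[OF p] conf_nonzero[of p]
    by (simp add: vec_eq_iff forall_4 bfield_def appc_Umix[OF p] divT_Umix[OF p] Unum_def algebra_simps)
      blast
  also have "\<dots> \<longleftrightarrow> dl 1 p = 0 \<and> dl 2 p = 0"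
    by (rule lin_2x2_eq_0_iff) (use vdet_nonzero[OF p] in \<open>simp add: vdet_def algebra_simps\<close>)
  finally show ?thesis .
qed

lemma U_dlam_eq_0_iff: assumes p: "p \<in> Om"
  shows "U_dlam lam vh hh p = 0 \<longleftrightarrow> dl 1 p = 0 \<and> dl 2 p = 0"
  using vvol_nonzero[OF p] conf_nonzero[of p]
  by (auto simp: vec_eq_iff forall_4 U_dlam_def appc_Umix[OF p] dl_def)


section \<open>The dual 2-form and the field \<open>a\<close>\<close>

definition "hvol q = sqrt (hdet q)"

definition sUnum :: "4 \<Rightarrow> 4 \<Rightarrow> real^4 \<Rightarrow> real" where
  "sUnum a b q = (if a = 3 \<and> b = 3 then - hhat 3 4 q else if a = 3 \<and> b = 4 then - hhat 4 4 q
     else if a = 4 \<and> b = 3 then hhat 3 3 q else if a = 4 \<and> b = 4 then hhat 3 4 q else 0)"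

definition dsUnum :: "4 \<Rightarrow> 4 \<Rightarrow> 4 \<Rightarrow> real^4 \<Rightarrow> real" where
  "dsUnum d a b p = (if a = 3 \<and> b = 3 then - dghat d 3 4 p else if a = 3 \<and> b = 4 then - dghat d 4 4 p
     else if a = 4 \<and> b = 3 then dghat d 3 3 p else if a = 4 \<and> b = 4 then dghat d 3 4 p else 0)"

definition "dhdet d p = dghat d 3 3 p * hhat 4 4 p + hhat 3 3 p * dghat d 4 4 p - 2 * hhat 3 4 p * dghat d 3 4 p"

lemma hvol_nonzero: "q \<in> Om \<Longrightarrow> hvol q \<noteq> 0"
  using hdet_pos[of q] by (simp add: hvol_def)

lemma hdet_eq_hvol: "q \<in> Om \<Longrightarrow> hdet q = hvol q * hvol q"
  using hdet_pos[of q] by (simp add: hvol_def)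

lemma sqrt_det_gconf: assumes p: "p \<in> Om"
  shows "sqrt \<bar>det (gmat g p)\<bar> = (conf p)^2 * vvol p * hvol p"
proof -
  have "det (gmat g p) = (conf p)^4 * vdet p * hdet p"
    unfolding det_4x4
    by (simp add: gmat_def gconf_def conf_def ghat_coord[OF p] vdet_def hdet_def algebra_simps
        power4_eq_xxxx)
  also have "\<bar>\<dots>\<bar> = ((conf p)^2)^2 * (- vdet p) * hdet p"
    using vdet_neg[OF p] hdet_pos[OF p] by (simp add: abs_mult power_mult[symmetric])
  finally have "sqrt \<bar>det (gmat g p)\<bar> = sqrt (((conf p)^2)^2) * sqrt (- vdet p) * sqrt (hdet p)"
    by (simp only: real_sqrt_mult)
  then show ?thesis unfolding real_sqrt_abs by (simp add: vvol_def hvol_def)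
qed

lemma raise_Ucov: assumes p: "p \<in> Om"
  shows "(\<Sum>\<alpha>\<in>UNIV. \<Sum>\<beta>\<in>UNIV. ginv g \<mu> \<alpha> p * ginv g \<nu> \<beta> p * Ucov lam vh \<alpha> \<beta> p)
     = vvol p / conf p * (ghat_inv \<mu> 1 p * ghat_inv \<nu> 2 p - ghat_inv \<mu> 2 p * ghat_inv \<nu> 1 p)"
  unfolding ginv_gconf[OF p] Ucov_def Let_def Ucov_norm[OF p] sum_4
  using conf_nonzero[of p] by (simp add: field_simps power2_eq_square)

text \<open>\<open>*U\<close> is the volume form of \<open>H\<close>, up to the orientation sign.\<close>

lemma hodge_Ucov: assumes p: "p \<in> Om"
  shows "hodge g (Ucov lam vh) a b p = - conf p * hvol p * lcsym a b 1 2"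
proof -
  note nz = vvol_nonzero[OF p] conf_nonzero[of p]
  have inv_det: "ghat_inv 1 2 p * ghat_inv 1 2 p - ghat_inv 2 2 p * ghat_inv 1 1 p = 1 / (vvol p * vvol p)"
    using ghat_inv_vdet[OF p] by (simp add: vdet_eq_vvol[OF p] algebra_simps)
  then have "vvol p * vvol p * (ghat_inv 1 2 p * ghat_inv 1 2 p - ghat_inv 2 2 p * ghat_inv 1 1 p) = 1"
    using nz by simp
  moreover have "conf p * (conf p * hvol p) + conf p * (conf p * (vvol p * (vvol p * (hvol p *
        (ghat_inv 1 1 p * ghat_inv 2 2 p)))))
      - conf p * (conf p * (vvol p * (vvol p * (hvol p * (ghat_inv 1 2 p * ghat_inv 1 2 p)))))
      = conf p * conf p * hvol p *
        (1 - vvol p * vvol p * (ghat_inv 1 2 p * ghat_inv 1 2 p - ghat_inv 2 2 p * ghat_inv 1 1 p))"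
    by (simp add: algebra_simps)
  ultimately have key: "conf p * (conf p * hvol p) + conf p * (conf p * (vvol p * (vvol p * (hvol p *
        (ghat_inv 1 1 p * ghat_inv 2 2 p)))))
      = conf p * (conf p * (vvol p * (vvol p * (hvol p * (ghat_inv 1 2 p * ghat_inv 1 2 p)))))"
    by simp
  have "hodge g (Ucov lam vh) a b p =
    (\<Sum>\<mu>\<in>UNIV. \<Sum>\<nu>\<in>UNIV. (conf p)^2 * vvol p * hvol p * lcsym a b \<mu> \<nu> *
      (vvol p / conf p * (ghat_inv \<mu> 1 p * ghat_inv \<nu> 2 p - ghat_inv \<mu> 2 p * ghat_inv \<nu> 1 p))) / 2"
    unfolding hodge_def vol_def sqrt_det_gconf[OF p] raise_Ucov[OF p] ..
  also have "\<dots> = - conf p * hvol p * lcsym a b 1 2"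
    unfolding sum_4
    using exhaust_4[of a] exhaust_4[of b] nz
    by (elim disjE)
      (simp_all add: lcsym_def ipos_def ghat_inv_offblock ghat_inv_sym inv_det,
       simp_all add: field_simps power2_eq_square, use key in \<open>simp_all add: ac_simps\<close>)
  finally show ?thesis .
qed

lemma sUmix_coord: assumes q: "q \<in> Om"
  shows "sUmix lam vh hh a b q = sUnum a b q / hvol q"
  unfolding sUmix_def raise1_def ginv_gconf[OF q] hodge_Ucov[OF q] sum_4
  using exhaust_4[of a] exhaust_4[of b] hvol_nonzero[OF q] conf_nonzero[of q]
  by (elim disjE) (simp_all add: ghat_inv_def sUnum_def lcsym_def ipos_def hdet_eq_hvol[OF q] field_simps)

lemma has_real_derivative_hhat: assumes p: "p \<in> Om" and "sp i" "sp j"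
  shows "((\<lambda>t. hhat i j (p + t *\<^sub>R axis d 1)) has_real_derivative dghat d i j p) (at 0)"
proof -
  have "(\<lambda>q. hhat i j q) = ghat vh hh i j" using assms by (auto simp: hhat_def ghat_def tl_def sp_def)
  then show ?thesis
    using has_real_derivative_pd[OF differentiable_ghat[OF p], of i j d] by (simp add: dghat_def)
qed

lemma pd_sUmix: assumes p: "p \<in> Om"
  shows "pd d (sUmix lam vh hh a b) p = (dsUnum d a b p - sUnum a b p * dhdet d p / (2 * hdet p)) / hvol p"
proof -
  note H = has_real_derivative_hhat[OF p tl_sp_simps(5) tl_sp_simps(5), of d]
    has_real_derivative_hhat[OF p tl_sp_simps(5) tl_sp_simps(6), of d]
    has_real_derivative_hhat[OF p tl_sp_simps(6) tl_sp_simps(6), of d]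
  have N: "((\<lambda>t. sUnum a b (p + t *\<^sub>R axis d 1)) has_real_derivative dsUnum d a b p) (at 0)"
    using exhaust_4[of a] exhaust_4[of b]
    by (elim disjE) (simp_all add: sUnum_def dsUnum_def H DERIV_minus)
  have D: "((\<lambda>t. hdet (p + t *\<^sub>R axis d 1)) has_real_derivative dhdet d p) (at 0)"
    unfolding hdet_def
    by (rule DERIV_cong[OF DERIV_diff[OF DERIV_mult[OF H(1) H(3)] DERIV_mult[OF H(2) H(2)]]])
      (simp add: dhdet_def algebra_simps)
  have "0 < hdet (p + 0 *\<^sub>R axis d 1)" using hdet_pos[OF p] by simp
  from DERIV_chain2[OF DERIV_real_sqrt[OF this] D]
  have S: "((\<lambda>t. hvol (p + t *\<^sub>R axis d 1)) has_real_derivative dhdet d p / (2 * hvol p)) (at 0)"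
    by (simp add: o_def hvol_def field_simps)
  have "pd d (sUmix lam vh hh a b) p = pd d (\<lambda>q. sUnum a b q / hvol q) p"
    by (rule pd_cong_open[OF open_Om p]) (simp add: sUmix_coord)
  also have "\<dots> = (dsUnum d a b p * hvol p - sUnum a b p * (dhdet d p / (2 * hvol p))) / (hvol p * hvol p)"
    by (rule pd_eqI) (use DERIV_divide[OF N S] hvol_nonzero[OF p] in simp)
  also have "\<dots> = (dsUnum d a b p - sUnum a b p * dhdet d p / (2 * hdet p)) / hvol p"
    using hvol_nonzero[OF p] by (simp add: hdet_eq_hvol[OF p] field_simps)
  finally show ?thesis .
qed

definition "christ_hhat a b c p = (ghat_inv a 3 p * (dghat b 3 c p + dghat c 3 b p - dghat 3 b c p)
    + ghat_inv a 4 p * (dghat b 4 c p + dghat c 4 b p - dghat 4 b c p)) / 2"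

lemma christ_sss: assumes p: "p \<in> Om" and "sp a" "sp b" "sp c"
  shows "christ g a b c p = christ_hhat a b c p + (if a = c then dl b p else 0)
     + (if a = b then dl c p else 0) - ghat vh hh b c p * (ghat_inv a 3 p * dl 3 p + ghat_inv a 4 p * dl 4 p)"
proof -
  have "ghat_inv a 1 p = 0" "ghat_inv a 2 p = 0" using assms(2) by (auto simp: ghat_inv_def sp_def)
  then have "christ g a b c p = christ_hhat a b c p
     + dl b p * (ghat_inv a 3 p * ghat vh hh 3 c p + ghat_inv a 4 p * ghat vh hh 4 c p)
     + dl c p * (ghat_inv a 3 p * ghat vh hh 3 b p + ghat_inv a 4 p * ghat vh hh 4 b p)
     - ghat vh hh b c p * (ghat_inv a 3 p * dl 3 p + ghat_inv a 4 p * dl 4 p)"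
    unfolding christ_gconf[OF p] sum_4 christ_hhat_def by (simp add: field_simps)
  then show ?thesis using assms by (simp add: ghat_inv_hhat[OF p])
qed

lemma christ_tts_trace: assumes p: "p \<in> Om" and e: "sp e"
  shows "christ g 1 1 e p + christ g 2 2 e p = 2 * dl e p"
proof -
  have "christ g a a e p = dl e p * (ghat_inv a 1 p * ghat vh hh 1 a p + ghat_inv a 2 p * ghat vh hh 2 a p)"
    if "tl a" for a
  proof -
    have "a = 1 \<or> a = 2" "e = 3 \<or> e = 4" using that e by (auto simp: tl_def sp_def)
    then show ?thesis unfolding christ_gconf[OF p] sum_4
      by (elim disjE)
        (simp_all add: ghat_inv_offblock ghat_coord[OF p] dghat_offblock dghat_vhat_along_sp field_simps)
  qed
  then have "christ g 1 1 e p + christ g 2 2 e p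
     = dl e p * (ghat_inv 1 1 p * vhat 1 1 p + 2 * ghat_inv 1 2 p * vhat 1 2 p + ghat_inv 2 2 p * vhat 2 2 p)"
    by (simp add: ghat_coord[OF p] ghat_inv_sym algebra_simps)
  then show ?thesis using ghat_inv_vhat_trace[OF p] by simp
qed

lemma divT_sUmix_expand: assumes p: "p \<in> Om" and c: "sp c"
  shows "divT g (sUmix lam vh hh) c p =
   ((dsUnum 3 3 c p - sUnum 3 c p * dhdet 3 p / (2 * hdet p))
    + (dsUnum 4 4 c p - sUnum 4 c p * dhdet 4 p / (2 * hdet p))
    + (christ g 3 3 3 p + christ g 4 4 3 p + (christ g 1 1 3 p + christ g 2 2 3 p)) * sUnum 3 c p
    + (christ g 3 3 4 p + christ g 4 4 4 p + (christ g 1 1 4 p + christ g 2 2 4 p)) * sUnum 4 c p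
    - (christ g 3 3 c p * sUnum 3 3 p + christ g 4 3 c p * sUnum 3 4 p
       + christ g 3 4 c p * sUnum 4 3 p + christ g 4 4 c p * sUnum 4 4 p)) / hvol p"
proof -
  have "c = 3 \<or> c = 4" using c by (auto simp: sp_def)
  then show ?thesis
    unfolding divT_def pd_sUmix[OF p] sUmix_coord[OF p] sum_4
    using hvol_nonzero[OF p] by (elim disjE) (simp_all add: sUnum_def dsUnum_def field_simps)
qed

lemma divT_sUmix: assumes p: "p \<in> Om" and c: "sp c"
  shows "divT g (sUmix lam vh hh) c p = 2 * (dl 3 p * sUnum 3 c p + dl 4 p * sUnum 4 c p) / hvol p"
proof -
  have "c = 3 \<or> c = 4" using c by (auto simp: sp_def)
  then have num: "(dsUnum 3 3 c p - sUnum 3 c p * dhdet 3 p / (2 * hdet p))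
      + (dsUnum 4 4 c p - sUnum 4 c p * dhdet 4 p / (2 * hdet p))
      + (christ g 3 3 3 p + christ g 4 4 3 p + 2 * dl 3 p) * sUnum 3 c p
      + (christ g 3 3 4 p + christ g 4 4 4 p + 2 * dl 4 p) * sUnum 4 c p
      - (christ g 3 3 c p * sUnum 3 3 p + christ g 4 3 c p * sUnum 3 4 p
         + christ g 3 4 c p * sUnum 4 3 p + christ g 4 4 c p * sUnum 4 4 p)
    = 2 * (dl 3 p * sUnum 3 c p + dl 4 p * sUnum 4 c p)"
    using hdet_nonzero[OF p]
    by (elim disjE)
      (simp_all add: christ_sss[OF p] christ_hhat_def ghat_inv_def ghat_coord[OF p] sUnum_def
         dsUnum_def dhdet_def dghat_sym[OF p],
       simp_all add: field_simps, simp_all add: hdet_def algebra_simps)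
  show ?thesis
    unfolding divT_sUmix_expand[OF p c] christ_tts_trace[OF p tl_sp_simps(5)]
      christ_tts_trace[OF p tl_sp_simps(6)] num ..
qed

lemma appc_sUmix: assumes p: "p \<in> Om"
  shows "appc g (sUmix lam vh hh) w p $ a =
    (if a = 3 then - w 4 p / (conf p * hvol p) else if a = 4 then w 3 p / (conf p * hvol p) else 0)"
  unfolding appc_def vec_lambda_beta sUmix_coord[OF p] ginv_gconf[OF p] sum_4
  using exhaust_4[of a] hvol_nonzero[OF p] conf_nonzero[of p] hdet_nonzero[OF p]
  by (elim disjE) (simp_all add: sUnum_def ghat_inv_def field_simps, simp_all add: hdet_def algebra_simps)

lemma afield_eq_0_iff: assumes p: "p \<in> Om"
  shows "afield lam vh hh p = 0 \<longleftrightarrow> dl 3 p = 0 \<and> dl 4 p = 0"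
proof -
  have "afield lam vh hh p = 0 \<longleftrightarrow>
      ((- hhat 3 4 p) * dl 3 p + hhat 3 3 p * dl 4 p = 0 \<and> (- hhat 4 4 p) * dl 3 p + hhat 3 4 p * dl 4 p = 0)"
    using hvol_nonzero[OF p] conf_nonzero[of p]
    by (simp add: vec_eq_iff forall_4 afield_def appc_sUmix[OF p] divT_sUmix[OF p] sUnum_def algebra_simps)
      blast
  also have "\<dots> \<longleftrightarrow> dl 3 p = 0 \<and> dl 4 p = 0"
    by (rule lin_2x2_eq_0_iff) (use hdet_nonzero[OF p] in \<open>simp add: hdet_def algebra_simps\<close>)
  finally show ?thesis .
qed

lemma sU_dlam_eq_0_iff: assumes p: "p \<in> Om"
  shows "sU_dlam lam vh hh p = 0 \<longleftrightarrow> dl 3 p = 0 \<and> dl 4 p = 0"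
  using hvol_nonzero[OF p] conf_nonzero[of p]
  by (auto simp: vec_eq_iff forall_4 sU_dlam_def appc_sUmix[OF p] dl_def)

lemma dlam_eq_0_iff: "dlam lam p = 0 \<longleftrightarrow> dl 1 p = 0 \<and> dl 2 p = 0 \<and> dl 3 p = 0 \<and> dl 4 p = 0"
  by (simp add: vec_eq_iff forall_4 dlam_def dl_def)

end

theorem proposition8:
  fixes A B :: "(real \<times> real) set"
    and lam :: "real^4 \<Rightarrow> real"
    and vh hh :: "4 \<Rightarrow> 4 \<Rightarrow> real \<Rightarrow> real \<Rightarrow> real"
    and Om :: "(real^4) set"
  assumes "open A" and "open B"
    and Om_def: "Om = {p. (p$1, p$2) \<in> A \<and> (p$3, p$4) \<in> B}"
    and vh_lor: "\<And>x y. (x, y) \<in> A \<Longrightarrow>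
           vh 1 2 x y = vh 2 1 x y \<and> vh 1 1 x y * vh 2 2 x y - (vh 1 2 x y)^2 < 0"
    and hh_riem: "\<And>x y. (x, y) \<in> B \<Longrightarrow>
           hh 3 4 x y = hh 4 3 x y \<and> hh 3 3 x y > 0 \<and> hh 3 3 x y * hh 4 4 x y - (hh 3 4 x y)^2 > 0"
    and smooth_ghat: "\<And>i j. smooth_on Om (ghat vh hh i j)"
    and smooth_lam: "smooth_on Om lam"
  shows
    "(class00 Om lam vh hh \<longleftrightarrow> (\<forall>p\<in>Om. afield lam vh hh p = 0 \<and> bfield lam vh hh p = 0))
   \<and> (class00 Om lam vh hh \<longleftrightarrow> (\<forall>p\<in>Om. dlam lam p = 0))
   \<and> (class01 Om lam vh hh \<longleftrightarrow>
        (\<forall>p\<in>Om. afield lam vh hh p = 0) \<and> (\<exists>p\<in>Om. bfield lam vh hh p \<noteq> 0))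
   \<and> (class01 Om lam vh hh \<longleftrightarrow>
        (\<exists>p\<in>Om. dlam lam p \<noteq> 0) \<and> (\<forall>p\<in>Om. sU_dlam lam vh hh p = 0))
   \<and> (class10 Om lam vh hh \<longleftrightarrow>
        (\<exists>p\<in>Om. afield lam vh hh p \<noteq> 0) \<and> (\<forall>p\<in>Om. bfield lam vh hh p = 0))
   \<and> (class10 Om lam vh hh \<longleftrightarrow>
        (\<exists>p\<in>Om. dlam lam p \<noteq> 0) \<and> (\<forall>p\<in>Om. U_dlam lam vh hh p = 0))
   \<and> (class11 Om lam vh hh \<longleftrightarrow>
        (\<exists>p\<in>Om. afield lam vh hh p \<noteq> 0) \<and> (\<exists>p\<in>Om. bfield lam vh hh p \<noteq> 0))
   \<and> (class11 Om lam vh hh \<longleftrightarrow>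
        (\<exists>p\<in>Om. U_dlam lam vh hh p \<noteq> 0) \<and> (\<exists>p\<in>Om. sU_dlam lam vh hh p \<noteq> 0))"
proof -
  interpret conformal_product A B lam vh hh Om
    by unfold_locales (fact assms)+
  have "\<forall>p\<in>Om. afield lam vh hh p = 0 \<longleftrightarrow> dl 3 p = 0 \<and> dl 4 p = 0"
    and "\<forall>p\<in>Om. sU_dlam lam vh hh p = 0 \<longleftrightarrow> dl 3 p = 0 \<and> dl 4 p = 0"
    and "\<forall>p\<in>Om. bfield lam vh hh p = 0 \<longleftrightarrow> dl 1 p = 0 \<and> dl 2 p = 0"
    and "\<forall>p\<in>Om. U_dlam lam vh hh p = 0 \<longleftrightarrow> dl 1 p = 0 \<and> dl 2 p = 0"
    using afield_eq_0_iff sU_dlam_eq_0_iff bfield_eq_0_iff U_dlam_eq_0_iff by blast+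
  then show ?thesis
    unfolding class00_def class01_def class10_def class11_def V_minimal_iff H_minimal_iff
    using dlam_eq_0_iff by (intro conjI) (auto; meson)+
qed

end
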